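(* Let $(S(t),E(t),I(t),R(t))$ be a solution of the SEIR initial value problem described in the context. If $S(t)>0$ for $t>0$, then \[ R''(t)+(\gamma+\delta)R'(t)=\gamma\delta\Bigl(N-\tilde S e^{(\beta/\gamma)\tilde R}e^{-(\beta/\gamma)R(t)}-R(t)\Bigr)\qquad(t>0). \]
   Context: Let $\beta,\gamma,\delta>0$ be constants and $\tilde S,\tilde E,\tilde I,\tilde R$ real numbers with $N:=\tilde S+\tilde E+\tilde I+\tilde R>0$. The SEIR initial value problem is $S'(t)=-\beta S(t)I(t)$, $E'(t)=\beta S(t)I(t)-\delta E(t)$, $I'(t)=\delta E(t)-\gamma I(t)$, $R'(t)=\gamma I(t)$ for $t>0$, with $S(0)=\tilde S$, $E(0)=\tilde E$, $I(0)=\tilde I$, $R(0)=\tilde R$; a solution is a vector function $(S,E,I,R)$ of class $C^1(0,\infty)\cap C[0,\infty)$ satisfying these. Standing assumptions: (A1) $\tilde I>0$; (A2) $\tilde E>(\gamma/\delta)\tilde I$; (A3) $\tilde S>\delta\tilde E/(\beta\tilde I)$; (A4) $\tilde R\ge 0$ and $N>\tilde S e^{(\beta/\gamma)\tilde R}+\tilde R$. *)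

theory Defs
  imports "HOL-Analysis.Analysis"
begin

definition is_C1_on_pos :: "(real \<Rightarrow> real) \<Rightarrow> bool" where
  "is_C1_on_pos f \<longleftrightarrow> (\<forall>t>0. f differentiable (at t)) \<and> continuous_on {0<..} (deriv f)"

definition SEIR_solution ::
  "real \<Rightarrow> real \<Rightarrow> real \<Rightarrow> real \<Rightarrow> real \<Rightarrow> real \<Rightarrow> real \<Rightarrow>
   (real \<Rightarrow> real) \<Rightarrow> (real \<Rightarrow> real) \<Rightarrow> (real \<Rightarrow> real) \<Rightarrow> (real \<Rightarrow> real) \<Rightarrow> bool" where
  "SEIR_solution \<beta> \<gamma> \<delta> S0 E0 I0 R0 S E I R \<longleftrightarrow>
     is_C1_on_pos S \<and> is_C1_on_pos E \<and> is_C1_on_pos I \<and> is_C1_on_pos R \<and>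
     continuous_on {0..} S \<and> continuous_on {0..} E \<and>
     continuous_on {0..} I \<and> continuous_on {0..} R \<and>
     (\<forall>t>0. (S has_real_derivative (- \<beta> * S t * I t)) (at t)) \<and>
     (\<forall>t>0. (E has_real_derivative (\<beta> * S t * I t - \<delta> * E t)) (at t)) \<and>
     (\<forall>t>0. (I has_real_derivative (\<delta> * E t - \<gamma> * I t)) (at t)) \<and>
     (\<forall>t>0. (R has_real_derivative (\<gamma> * I t)) (at t)) \<and>
     S 0 = S0 \<and> E 0 = E0 \<and> I 0 = I0 \<and> R 0 = R0"

end

theory Submission
  imports Defs
begin

text \<open>Differentiating \<open>R' = \<gamma> I\<close> once more gives \<open>R'' + \<gamma> R' = \<gamma> \<delta> E\<close>. Two first integrals
  eliminate \<open>E\<close>: the total population \<open>S + E + I + R\<close> is conserved, and \<open>S e\<^bsup>(\<beta>/\<gamma>) R\<^esup>\<close> is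
  constant because \<open>(\<beta>/\<gamma>) R' = \<beta> I = - S'/S\<close>. Hence
  \<open>\<gamma> \<delta> E = \<gamma> \<delta> (N - S - R) - \<delta> R'\<close> with \<open>S = S\<^sub>0 e\<^bsup>(\<beta>/\<gamma>) R\<^sub>0\<^esup> e\<^bsup>-(\<beta>/\<gamma>) R\<^esup>\<close>.\<close>

lemma DERIV_zero_constant_atLeast:
  fixes f :: "real \<Rightarrow> real"
  assumes "continuous_on {a..} f"
    and "\<And>x. x > a \<Longrightarrow> (f has_real_derivative 0) (at x)"
    and "t \<ge> a"
  shows "f t = f a"
proof (cases "t = a")
  case False
  then have "a < t" using assms(3) by simp
  moreover have "continuous_on {a..t} f"
    using assms(1) by (rule continuous_on_subset) auto
  ultimately show ?thesis
    by (rule DERIV_isconst_end) (use assms(2) in auto)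
qed simp

lemma SEIR_total_population:
  assumes sol: "SEIR_solution \<beta> \<gamma> \<delta> S0 E0 I0 R0 S E I R" and "t \<ge> 0"
  shows "S t + E t + I t + R t = S0 + E0 + I0 + R0"
proof -
  note s = sol[unfolded SEIR_solution_def]
  have "(\<lambda>x. S x + E x + I x + R x) t = (\<lambda>x. S x + E x + I x + R x) 0"
  proof (rule DERIV_zero_constant_atLeast[OF _ _ \<open>t \<ge> 0\<close>])
    show "continuous_on {0..} (\<lambda>x. S x + E x + I x + R x)"
      using s by (intro continuous_intros) auto
    fix x :: real
    assume "x > 0"
    then have "((\<lambda>x. S x + E x + I x + R x) has_real_derivative
        (- \<beta> * S x * I x) + (\<beta> * S x * I x - \<delta> * E x) + (\<delta> * E x - \<gamma> * I x) + \<gamma> * I x) (at x)"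
      using s by (intro derivative_intros) auto
    then show "((\<lambda>x. S x + E x + I x + R x) has_real_derivative 0) (at x)"
      by simp
  qed
  then show ?thesis
    using s by simp
qed

lemma SEIR_S_exp_R_constant:
  assumes sol: "SEIR_solution \<beta> \<gamma> \<delta> S0 E0 I0 R0 S E I R" and "\<gamma> \<noteq> 0" and "t \<ge> 0"
  shows "S t * exp ((\<beta> / \<gamma>) * R t) = S0 * exp ((\<beta> / \<gamma>) * R0)"
proof -
  note s = sol[unfolded SEIR_solution_def]
  define k where "k = \<beta> / \<gamma>"
  have "(\<lambda>x. S x * exp (k * R x)) t = (\<lambda>x. S x * exp (k * R x)) 0"
  proof (rule DERIV_zero_constant_atLeast[OF _ _ \<open>t \<ge> 0\<close>])
    show "continuous_on {0..} (\<lambda>x. S x * exp (k * R x))"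
      using s by (intro continuous_intros) auto
    fix x :: real
    assume "x > 0"
    then have "((\<lambda>x. S x * exp (k * R x)) has_real_derivative
        (- \<beta> * S x * I x) * exp (k * R x) + S x * (exp (k * R x) * (k * (\<gamma> * I x)))) (at x)"
      using s by (auto intro!: derivative_eq_intros)
    moreover have "(- \<beta> * S x * I x) * exp (k * R x) + S x * (exp (k * R x) * (k * (\<gamma> * I x))) = 0"
      using \<open>\<gamma> \<noteq> 0\<close> by (simp add: k_def field_simps)
    ultimately show "((\<lambda>x. S x * exp (k * R x)) has_real_derivative 0) (at x)"
      by metis
  qed
  then show ?thesis
    using s by (simp add: k_def)
qed

lemma SEIR_S_eq:
  assumes "SEIR_solution \<beta> \<gamma> \<delta> S0 E0 I0 R0 S E I R" and "\<gamma> \<noteq> 0" and "t \<ge> 0"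
  shows "S t = S0 * exp ((\<beta> / \<gamma>) * R0) * exp (- (\<beta> / \<gamma>) * R t)"
  using SEIR_S_exp_R_constant[OF assms]
  by (metis exp_minus_inverse mult.assoc mult.right_neutral mult_minus_left)

lemma SEIR_second_derivative_R:
  assumes sol: "SEIR_solution \<beta> \<gamma> \<delta> S0 E0 I0 R0 S E I R" and "t > 0"
  shows "deriv R t = \<gamma> * I t"
    and "(deriv R has_real_derivative \<gamma> * (\<delta> * E t - \<gamma> * I t)) (at t)"
proof -
  note s = sol[unfolded SEIR_solution_def]
  have deriv_R: "deriv R x = \<gamma> * I x" if "x > 0" for x
    using s that by (blast intro: DERIV_imp_deriv)
  then show "deriv R t = \<gamma> * I t"
    using \<open>t > 0\<close> .
  have "((\<lambda>x. \<gamma> * I x) has_real_derivative \<gamma> * (\<delta> * E t - \<gamma> * I t)) (at t)"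
    using s \<open>t > 0\<close> by (blast intro: DERIV_cmult)
  then show "(deriv R has_real_derivative \<gamma> * (\<delta> * E t - \<gamma> * I t)) (at t)"
    by (rule has_field_derivative_transform_within_open[where S="{0<..}"])
      (use \<open>t > 0\<close> deriv_R in auto)
qed

theorem lemma1:
  fixes \<beta> \<gamma> \<delta> S0 E0 I0 R0 :: real and S E I R :: "real \<Rightarrow> real"
  defines "N \<equiv> S0 + E0 + I0 + R0"
  assumes params: "\<beta> > 0" "\<gamma> > 0" "\<delta> > 0"
    and N_pos: "N > 0"
    and A1: "I0 > 0"
    and A2: "E0 > (\<gamma> / \<delta>) * I0"
    and A3: "S0 > \<delta> * E0 / (\<beta> * I0)"
    and A4: "R0 \<ge> 0" "N > S0 * exp ((\<beta> / \<gamma>) * R0) + R0"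
    and sol: "SEIR_solution \<beta> \<gamma> \<delta> S0 E0 I0 R0 S E I R"
    and S_pos: "\<forall>t>0. S t > 0"
  shows "\<forall>t>0. (deriv R has_real_derivative
           (\<gamma> * \<delta> * (N - S0 * exp ((\<beta> / \<gamma>) * R0) * exp (- (\<beta> / \<gamma>) * R t) - R t)
            - (\<gamma> + \<delta>) * deriv R t)) (at t)"
proof (intro allI impI)
  fix t :: real
  assume "t > 0"
  then have "t \<ge> 0"
    by simp
  have "\<gamma> \<noteq> 0"
    using params by simp
  have E_eq: "E t = N - S t - I t - R t"
    using SEIR_total_population[OF sol \<open>t \<ge> 0\<close>] unfolding N_def by simp
  note S_eq = SEIR_S_eq[OF sol \<open>\<gamma> \<noteq> 0\<close> \<open>t \<ge> 0\<close>]
  note R'_eq = SEIR_second_derivative_R(1)[OF sol \<open>t > 0\<close>]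
  have "\<gamma> * (\<delta> * E t - \<gamma> * I t) =
      \<gamma> * \<delta> * (N - S0 * exp ((\<beta> / \<gamma>) * R0) * exp (- (\<beta> / \<gamma>) * R t) - R t)
      - (\<gamma> + \<delta>) * deriv R t"
    unfolding E_eq R'_eq S_eq by (simp add: algebra_simps)
  with SEIR_second_derivative_R(2)[OF sol \<open>t > 0\<close>]
  show "(deriv R has_real_derivative
      (\<gamma> * \<delta> * (N - S0 * exp ((\<beta> / \<gamma>) * R0) * exp (- (\<beta> / \<gamma>) * R t) - R t)
       - (\<gamma> + \<delta>) * deriv R t)) (at t)"
    by simp
qed

end
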